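(* Assume hypothesis (A). Then for every $\gamma=(\gamma_1,\dots,\gamma_d)\in\Gamma$, the function $h_\gamma:\mathbb{Z}_+^d\to\mathbb{R}_+$ defined by $$h_\gamma(x)=\sum_{i=1}^d \exp(\overrightarrow{\gamma_i}\cdot x),\qquad x\in\mathbb{Z}_+^d,$$ satisfies $$\limsup_{|x|\to\infty}\frac{\mathcal{L}h_\gamma(x)}{h_\gamma(x)}=-\min_{1\le i\le d}\frac{\gamma_i}{G_{ii}}\Bigl(\frac{\mu_i}{1+\gamma_i}-\nu_i\Bigr).$$
   Context: Jackson network with $d$ queues: arrival rates $\lambda_1,\dots,\lambda_d\ge 0$, service rates $\mu_1,\dots,\mu_d>0$, routing matrix $P=(p_{ij})_{i,j=1}^d$ with nonnegative entries, $p_{ii}=0$, $\sum_j p_{ij}\le 1$, and $p_{i0}=1-\sum_{j=1}^d p_{ij}$. Let $\epsilon^i$ be the $i$-th unit vector of $\mathbb{Z}^d$ and let $q:\mathbb{Z}^d\to\mathbb{R}_+$ be given by $q(\epsilon^i)=\lambda_i$, $q(-\epsilon^i)=\mu_ip_{i0}$, $q(\epsilon^j-\epsilon^i)=\mu_ip_{ij}$ ($i,j\in\{1,\dots,d\}$), and $q(y)=0$ otherwise. The queue-length process $(Z(t))$ is the continuous-time Markov process on $\mathbb{Z}_+^d$ with generator $\mathcal{L}f(y)=\sum_{z\in\mathbb{Z}_+^d}q(z-y)(f(z)-f(y))$, $y\in\mathbb{Z}_+^d$. Hypothesis (A): the matrix $(q(x-y))_{x,y\in\mathbb{Z}^d}$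 is irreducible; equivalently (A1) the spectral radius of $P$ is $<1$ (every customer eventually leaves) and (A2) for every $i$ there are $n\in\mathbb{N}$ and $j$ with $\lambda_jp^{(n)}_{ji}>0$ ($p^{(n)}$ the $n$-step transition probabilities of $P$). Under (A) the traffic equations $\nu_j=\lambda_j+\sum_{i=1}^d\nu_ip_{ij}$, $j=1,\dots,d$, have a unique solution, with all $\nu_i>0$. Let $G=(I-P)^{-1}=\sum_{n\ge0}P^n$. Let $(\xi_n)$ be the Markov chain on $\{0,1,\dots,d\}$ with transition probabilities $p_{ij}$ from $i\in\{1,\dots,d\}$ to $j\in\{0,\dots,d\}$ and $0$ absorbing; for $j\ge1$ let $\tau_j=\inf\{n\ge0:\xi_n=j\}$ ($\inf\emptyset=+\infty$) and $Q_{ij}=\mathbb{P}_i(\tau_j<\infty)$ (so $Q_{ii}=1$). For $\gamma\in\mathbb{R}_+^d$ define vectors $\overrightarrow{\gamma_i}=(\gamma_i^1,\dots,\gamma_i^d)$ by $\gamma_i^j=\log(1+Q_{ji}\gamma_i)$. $\Gamma$ is the set of $\gamma\in\mathbb{R}_+^d$ such that for every $i\in\{1,\dots,d\}$ and every nonzero $v\in\mathbb{R}_+^d$ with $v^i=0$, $\overrightarrow{\gamma_i}\cdot v<\max_{1\le j\le d}\overrightarrow{\gamma_j}\cdot v$ (usual scalar product). *)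

theory Defs
  imports "HOL-Analysis.Analysis"
begin

text \<open>Queues are indexed by a finite type 'd (d = CARD('d)). Arrival rates lam, service
rates mu, routing matrix P (P $ i $ j = p_ij). States are integer vectors int^'d.\<close>

definition unitv :: "'d::finite \<Rightarrow> int^'d" where
  "unitv i = (\<chi> k. if k = i then 1 else 0)"

definition exitp :: "real^'d^'d \<Rightarrow> 'd::finite \<Rightarrow> real" where
  "exitp P i = 1 - (\<Sum>j\<in>UNIV. P $ i $ j)"

definition jackson_params :: "real^'d \<Rightarrow> real^'d \<Rightarrow> real^'d^'d \<Rightarrow> bool" where
  "jackson_params lam mu P \<longleftrightarrow>
     (\<forall>i. 0 \<le> lam $ i) \<and> (\<forall>i. 0 < mu $ i) \<and>
     (\<forall>i j. 0 \<le> P $ i $ j) \<and> (\<forall>i. P $ i $ i = 0) \<and>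
     (\<forall>i. (\<Sum>j\<in>UNIV. P $ i $ j) \<le> 1)"

definition qrate :: "real^'d \<Rightarrow> real^'d \<Rightarrow> real^'d^'d \<Rightarrow> int^'d \<Rightarrow> real" where
  "qrate lam mu P v =
     (\<Sum>i\<in>UNIV. if v = unitv i then lam $ i else 0)
   + (\<Sum>i\<in>UNIV. if v = - unitv i then mu $ i * exitp P i else 0)
   + (\<Sum>i\<in>UNIV. \<Sum>j\<in>UNIV. if v = unitv j - unitv i then mu $ i * P $ i $ j else 0)"

text \<open>Hypothesis (A): the matrix (q(x-y))_{x,y in Z^d} is irreducible.\<close>
definition hypA :: "real^'d \<Rightarrow> real^'d \<Rightarrow> real^'d^'d \<Rightarrow> bool" where
  "hypA lam mu P \<longleftrightarrow>
     (\<forall>x y :: int^'d. (\<lambda>a b. 0 < qrate lam mu P (b - a))\<^sup>*\<^sup>* x y)"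

definition posorth :: "(int^'d) set" where
  "posorth = {z. \<forall>i. 0 \<le> z $ i}"

definition gen :: "real^'d \<Rightarrow> real^'d \<Rightarrow> real^'d^'d \<Rightarrow> (int^'d \<Rightarrow> real) \<Rightarrow> int^'d \<Rightarrow> real" where
  "gen lam mu P f y = infsum (\<lambda>z. qrate lam mu P (z - y) * (f z - f y)) posorth"

definition traffic :: "real^'d \<Rightarrow> real^'d^'d \<Rightarrow> real^'d" where
  "traffic lam P = (THE nu. \<forall>j. nu $ j = lam $ j + (\<Sum>i\<in>UNIV. nu $ i * P $ i $ j))"

definition Gmat :: "real^'d^'d \<Rightarrow> real^'d^'d" where
  "Gmat P = matrix_inv (mat 1 - P)"

text \<open>Taboo probabilities: probability, starting from i, that the chain (xi_n) is at j at
time n and has not visited j before time n (state 0 is absorbing, so such paths stay in 1..d).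
Thus tabp P j n i = P_i(tau_j = n).\<close>
fun tabp :: "real^'d^'d \<Rightarrow> 'd::finite \<Rightarrow> nat \<Rightarrow> 'd \<Rightarrow> real" where
  "tabp P j 0 i = (if i = j then 1 else 0)"
| "tabp P j (Suc n) i = (if i = j then 0 else (\<Sum>k\<in>UNIV. P $ i $ k * tabp P j n k))"

text \<open>Q_ij = P_i(tau_j < infinity) = sum_n P_i(tau_j = n).\<close>
definition hitQ :: "real^'d^'d \<Rightarrow> 'd::finite \<Rightarrow> 'd \<Rightarrow> real" where
  "hitQ P i j = (\<Sum>n. tabp P j n i)"

definition gvec :: "real^'d^'d \<Rightarrow> real^'d \<Rightarrow> 'd::finite \<Rightarrow> real^'d" where
  "gvec P gamma i = (\<chi> j. ln (1 + hitQ P j i * gamma $ i))"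

definition GammaSet :: "real^'d^'d \<Rightarrow> (real^'d) set" where
  "GammaSet P = {gamma. (\<forall>i. 0 \<le> gamma $ i) \<and>
     (\<forall>i. \<forall>v::real^'d. (\<forall>k. 0 \<le> v $ k) \<and> v \<noteq> 0 \<and> v $ i = 0 \<longrightarrow>
        gvec P gamma i \<bullet> v < (MAX j\<in>UNIV. gvec P gamma j \<bullet> v))}"

definition hfun :: "real^'d^'d \<Rightarrow> real^'d \<Rightarrow> int^'d \<Rightarrow> real" where
  "hfun P gamma x = (\<Sum>i\<in>UNIV. exp (\<Sum>j\<in>UNIV. gvec P gamma i $ j * real_of_int (x $ j)))"

definition at_inf_pos :: "(int^'d::finite) filter" where
  "at_inf_pos = inf (filtercomap (\<lambda>x. \<Sum>i\<in>UNIV. \<bar>x $ i\<bar>) at_top) (principal posorth)"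

end

theory Submission
  imports Defs
begin

text \<open>For fixed \<open>k\<close> put \<open>b\<^sub>i = 1 + Q\<^sub>i\<^sub>k \<gamma>\<^sub>k = exp (\<gamma>\<^sub>k\<^sup>i)\<close>. A first-step analysis of the
  routing chain shows that \<open>b\<close> is harmonic off \<open>k\<close>, so the exponential
  \<open>exp (\<gamma>\<^sub>k \<bullet> x)\<close> is an eigenfunction of the generator up to boundary effects: its
  drift is \<open>\<gamma>\<^sub>k/G\<^sub>k\<^sub>k (\<nu>\<^sub>k - \<mu>\<^sub>k/(1+\<gamma>\<^sub>k))\<close> when \<open>x\<^sub>k > 0\<close> and \<open>\<gamma>\<^sub>k\<nu>\<^sub>k/G\<^sub>k\<^sub>k\<close>
  when \<open>x\<^sub>k = 0\<close> (here \<open>1/G\<^sub>k\<^sub>k\<close> is the probability of never returning to \<open>k\<close>, which (A)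
  makes positive). Hence \<open>\<L>h\<^sub>\<gamma>/h\<^sub>\<gamma>\<close> is a convex combination of these drifts with
  weights proportional to \<open>exp (\<gamma>\<^sub>k \<bullet> x)\<close>. The defining property of \<open>\<Gamma>\<close> makes the weight
  of \<open>k\<close> decay exponentially in \<open>|x|\<close> on the face \<open>x\<^sub>k = 0\<close>, so the limit superior is
  the largest interior drift, attained along the ray through \<open>e\<^sub>k\<close>.\<close>

section \<open>First-passage probabilities of the routing chain\<close>

definition substochastic :: "real^'d^'d::finite \<Rightarrow> bool" where
  "substochastic P \<longleftrightarrow> (\<forall>i j. 0 \<le> P $ i $ j) \<and> (\<forall>i. (\<Sum>j\<in>UNIV. P $ i $ j) \<le> 1)"

lemma jackson_params_substochastic: "jackson_params lam mu P \<Longrightarrow> substochastic P"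
  by (simp add: jackson_params_def substochastic_def)

lemma substochasticD:
  assumes "substochastic P"
  shows "0 \<le> P $ i $ j" "(\<Sum>j\<in>UNIV. P $ i $ j) \<le> 1"
  using assms by (auto simp: substochastic_def)

lemma exitp_nonneg: "substochastic P \<Longrightarrow> 0 \<le> exitp P i"
  by (simp add: exitp_def substochastic_def)

lemma tabp_nonneg: "substochastic P \<Longrightarrow> 0 \<le> tabp P k n i"
proof (induction n arbitrary: i)
  case (Suc n)
  then show ?case by (auto intro!: sum_nonneg mult_nonneg_nonneg substochasticD)
qed simp

lemma sum_tabp_le_1:
  assumes "substochastic P"
  shows "(\<Sum>n<N. tabp P k n i) \<le> 1"
proof (induction N arbitrary: i)
  case (Suc N)
  have shift: "(\<Sum>n<Suc N. tabp P k n i) = tabp P k 0 i + (\<Sum>n<N. tabp P k (Suc n) i)"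
    by (rule sum.lessThan_Suc_shift)
  show ?case
  proof (cases "i = k")
    case False
    have "(\<Sum>n<N. tabp P k (Suc n) i) = (\<Sum>j\<in>UNIV. P$i$j * (\<Sum>n<N. tabp P k n j))"
      using False by (simp add: sum_distrib_left sum.swap[of _ "{..<N}"])
    also have "\<dots> \<le> (\<Sum>j\<in>UNIV. P$i$j * 1)"
      using Suc by (intro sum_mono mult_left_mono substochasticD[OF assms])
    also have "\<dots> \<le> 1" using substochasticD[OF assms] by simp
    finally show ?thesis unfolding shift using False by simp
  qed (unfold shift, simp)
qed simp

lemma summable_tabp: "substochastic P \<Longrightarrow> summable (\<lambda>n. tabp P k n i)"
  by (rule summableI_nonneg_bounded[where x=1]) (simp_all add: tabp_nonneg sum_tabp_le_1)

lemma hitQ_nonneg: "substochastic P \<Longrightarrow> 0 \<le> hitQ P i k"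
  unfolding hitQ_def by (intro suminf_nonneg summable_tabp tabp_nonneg)

lemma hitQ_le_1: "substochastic P \<Longrightarrow> hitQ P i k \<le> 1"
  unfolding hitQ_def by (intro suminf_le_const summable_tabp sum_tabp_le_1)

lemma hitQ_self: "substochastic P \<Longrightarrow> hitQ P k k = 1"
  unfolding hitQ_def using suminf_split_head[OF summable_tabp, of P k k] by simp

lemma hitQ_first_step:
  assumes P: "substochastic P" and "i \<noteq> k"
  shows "hitQ P i k = (\<Sum>j\<in>UNIV. P$i$j * hitQ P j k)"
proof -
  have "hitQ P i k = (\<Sum>n. \<Sum>j\<in>UNIV. P$i$j * tabp P k n j)"
    unfolding hitQ_def using suminf_split_head[OF summable_tabp[OF P], of k i] \<open>i \<noteq> k\<close> by simp
  also have "\<dots> = (\<Sum>j\<in>UNIV. \<Sum>n. P$i$j * tabp P k n j)"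
    by (rule suminf_sum) (intro summable_mult summable_tabp[OF P])
  also have "\<dots> = (\<Sum>j\<in>UNIV. P$i$j * hitQ P j k)"
    unfolding hitQ_def by (intro sum.cong refl suminf_mult summable_tabp[OF P])
  finally show ?thesis .
qed

section \<open>Consequences of irreducibility\<close>

lemma unitv_nth: "unitv i $ k = (if k = i then 1 else 0)"
  by (simp add: unitv_def)

lemma sum_pos_obtain:
  fixes f :: "'a \<Rightarrow> real"
  assumes "0 < sum f A"
  obtains a where "a \<in> A" "0 < f a"
  using assms by (metis not_less sum_nonpos)

lemma qrate_pos_cases:
  fixes lam mu :: "real^'d::finite" and P :: "real^'d^'d"
  assumes JP: "jackson_params lam mu P" and jump: "0 < qrate lam mu P v"
  obtains (arrival) i where "v = unitv i"
    | (departure) i where "v = - unitv i" "0 < exitp P i"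
    | (routing) i j where "v = unitv j - unitv i" "0 < P $ i $ j"
proof -
  have mu_pos: "0 < mu $ i" for i using JP by (simp add: jackson_params_def)
  have mu: "0 < mu $ i * c \<longleftrightarrow> 0 < c" for i c using mu_pos[of i] by (simp add: zero_less_mult_iff)
  from jump consider "0 < (\<Sum>i\<in>UNIV. if v = unitv i then lam $ i else 0)"
    | "0 < (\<Sum>i\<in>UNIV. if v = - unitv i then mu $ i * exitp P i else 0)"
    | "0 < (\<Sum>i\<in>UNIV. \<Sum>j\<in>UNIV. if v = unitv j - unitv i then mu $ i * P $ i $ j else 0)"
    unfolding qrate_def by linarith
  then show ?thesis
  proof cases
    case 1 then show ?thesis
      by (elim sum_pos_obtain) (auto split: if_splits intro: arrival)
  next
    case 2 then show ?thesis
      by (elim sum_pos_obtain) (auto split: if_splits simp: mu intro: departure)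
  next
    case 3 then show ?thesis
      by (elim sum_pos_obtain) (auto split: if_splits simp: mu intro: routing)
  qed
qed

text \<open>The number of customers in a closed set \<open>S\<close> can never decrease along a jump, yet (A)
  connects \<open>0\<close> to \<open>-e\<^sub>k\<close>.\<close>

lemma hypA_no_closed_set:
  fixes lam mu :: "real^'d::finite" and P :: "real^'d^'d"
  assumes JP: "jackson_params lam mu P" and A: "hypA lam mu P" and "k \<in> S"
    and closed: "\<And>i. i \<in> S \<Longrightarrow> exitp P i = 0" "\<And>i j. i \<in> S \<Longrightarrow> 0 < P$i$j \<Longrightarrow> j \<in> S"
  shows False
proof -
  define load where "load = (\<lambda>x::int^'d. \<Sum>i\<in>S. x$i)"
  have load_diff: "load b = load a + load (b - a)" for a b
    unfolding load_def by (simp add: sum.distrib[symmetric])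
  have load_jump: "0 \<le> load v" if "0 < qrate lam mu P v" for v
    using JP that
  proof (cases rule: qrate_pos_cases)
    case (departure i)
    then have "i \<notin> S" using closed(1) by force
    then show ?thesis unfolding load_def departure by (auto simp: unitv_nth intro!: sum_nonneg)
  next
    case (routing i j)
    then have "i \<in> S \<longrightarrow> j \<in> S" using closed(2) by blast
    moreover have "load v = (if j \<in> S then 1 else 0) - (if i \<in> S then 1 else 0)"
      unfolding load_def routing by (simp add: unitv_nth sum_subtractf)
    ultimately show ?thesis by auto
  qed (auto simp: load_def unitv_nth intro!: sum_nonneg)
  have "(\<lambda>a b. 0 < qrate lam mu P (b - a))\<^sup>*\<^sup>* 0 (- unitv k)"
    using A unfolding hypA_def by blast
  then have "load 0 \<le> load (- unitv k)"
  proof (induction rule: rtranclp_induct)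
    case (step y z)
    then show ?case using load_diff[of z y] load_jump[of "z - y"] by linarith
  qed simp
  moreover have "load (- unitv k) = -1"
    unfolding load_def using \<open>k \<in> S\<close> by (simp add: unitv_nth sum_negf)
  ultimately show False by (simp add: load_def)
qed

text \<open>\<open>escape_prob P k\<close> is the probability that the routing chain started at \<open>k\<close>
  never returns to \<open>k\<close>.\<close>

definition escape_prob :: "real^'d^'d \<Rightarrow> 'd::finite \<Rightarrow> real" where
  "escape_prob P k = 1 - (\<Sum>j\<in>UNIV. P$k$j * hitQ P j k)"

lemma escape_prob_pos:
  fixes lam mu :: "real^'d::finite" and P :: "real^'d^'d"
  assumes JP: "jackson_params lam mu P" and A: "hypA lam mu P"
  shows "0 < escape_prob P k"
proof (rule ccontr)
  assume no_escape: "\<not> 0 < escape_prob P k"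
  have P: "substochastic P" using JP by (rule jackson_params_substochastic)
  define S where "S = {i. hitQ P i k = 1}"
  have closed: "exitp P i = 0 \<and> (\<forall>j. 0 < P$i$j \<longrightarrow> j \<in> S)" if "i \<in> S" for i
  proof -
    have terms_nonneg: "0 \<le> P$i$j * (1 - hitQ P j k)" for j
      using hitQ_le_1[OF P] substochasticD[OF P] by simp
    have "exitp P i + (\<Sum>j\<in>UNIV. P$i$j * (1 - hitQ P j k)) = 1 - (\<Sum>j\<in>UNIV. P$i$j * hitQ P j k)"
      by (simp add: exitp_def algebra_simps sum_subtractf)
    also have "\<dots> \<le> 0"
      using no_escape hitQ_first_step[OF P, of i k] that by (cases "i = k") (auto simp: escape_prob_def S_def)
    moreover have "0 \<le> (\<Sum>j\<in>UNIV. P$i$j * (1 - hitQ P j k))"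
      using terms_nonneg by (rule sum_nonneg)
    moreover note exitp_nonneg[OF P, of i]
    ultimately have "exitp P i = 0" "(\<Sum>j\<in>UNIV. P$i$j * (1 - hitQ P j k)) = 0"
      by linarith+
    moreover have "P$i$j * (1 - hitQ P j k) = 0" if "(\<Sum>j\<in>UNIV. P$i$j * (1 - hitQ P j k)) = 0" for j
      using that by (simp add: sum_nonneg_eq_0_iff terms_nonneg)
    ultimately show ?thesis by (force simp: S_def)
  qed
  show False
    using hypA_no_closed_set[OF JP A, of k S] closed hitQ_self[OF P] by (auto simp: S_def)
qed

section \<open>The Green matrix and the traffic equations\<close>

lemma matrix_inv_eqI:
  fixes A B :: "'a::field^'n^'n"
  assumes "A ** B = mat 1"
  shows "matrix_inv A = B"
  unfolding matrix_inv_def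
proof (rule some_equality)
  show "A ** B = mat 1 \<and> B ** A = mat 1" using assms matrix_left_right_inverse by blast
next
  fix X assume "A ** X = mat 1 \<and> X ** A = mat 1"
  then show "X = B" by (metis assms matrix_mul_assoc matrix_mul_lid matrix_mul_rid)
qed

lemma I_minus_routing_inverse:
  fixes lam mu :: "real^'d::finite" and P :: "real^'d^'d"
  assumes JP: "jackson_params lam mu P" and A: "hypA lam mu P"
  shows "(mat 1 - P) ** (\<chi> i k. hitQ P i k / escape_prob P k) = mat 1"
proof -
  have P: "substochastic P" using JP by (rule jackson_params_substochastic)
  define B where "B = ((\<chi> i k. hitQ P i k / escape_prob P k) :: real^'d^'d)"
  have "((mat 1 - P) ** B) $ i $ k = mat 1 $ i $ k" for i k
  proof -
    have "((mat 1 - P) ** B) $ i $ k = B $ i $ k - (\<Sum>j\<in>UNIV. P$i$j * B $ j $ k)"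
      by (simp add: matrix_matrix_mult_def mat_def left_diff_distrib sum_subtractf
          if_distrib[of "\<lambda>x. x * _"] cong: if_cong)
    also have "\<dots> = (hitQ P i k - (\<Sum>j\<in>UNIV. P$i$j * hitQ P j k)) / escape_prob P k"
      by (simp add: B_def sum_divide_distrib diff_divide_distrib)
    also have "\<dots> = mat 1 $ i $ k"
      using hitQ_first_step[OF P, of i k] hitQ_self[OF P, of k] escape_prob_pos[OF JP A, of k]
      by (auto simp: mat_def escape_prob_def)
    finally show ?thesis .
  qed
  then show ?thesis by (simp add: vec_eq_iff B_def)
qed

lemma Gmat_inverse:
  assumes "jackson_params lam mu P" "hypA lam mu P"
  shows "(mat 1 - P) ** Gmat P = mat 1" and "Gmat P ** (mat 1 - P) = mat 1"
proof -
  show "(mat 1 - P) ** Gmat P = mat 1"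
    unfolding Gmat_def matrix_inv_eqI[OF I_minus_routing_inverse[OF assms]]
    by (rule I_minus_routing_inverse[OF assms])
  then show "Gmat P ** (mat 1 - P) = mat 1" by (simp add: matrix_left_right_inverse)
qed

lemma Gmat_entry:
  assumes "jackson_params lam mu P" "hypA lam mu P"
  shows "Gmat P $ i $ k = hitQ P i k / escape_prob P k"
  using matrix_inv_eqI[OF I_minus_routing_inverse[OF assms]] by (simp add: Gmat_def)

lemma Gmat_diag:
  assumes "jackson_params lam mu P" "hypA lam mu P"
  shows "Gmat P $ k $ k = 1 / escape_prob P k"
  using Gmat_entry[OF assms] hitQ_self[OF jackson_params_substochastic[OF assms(1)]] by simp

lemma Gmat_diag_pos:
  assumes "jackson_params lam mu P" "hypA lam mu P"
  shows "0 < Gmat P $ k $ k"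
  using Gmat_diag[OF assms] escape_prob_pos[OF assms] by simp

lemma traffic_eq:
  fixes lam mu :: "real^'d::finite" and P :: "real^'d^'d"
  assumes JP: "jackson_params lam mu P" and A: "hypA lam mu P"
  shows "traffic lam P = lam v* Gmat P"
proof -
  note inv = Gmat_inverse[OF JP A]
  have traffic_iff: "(\<forall>j. nu $ j = lam $ j + (\<Sum>i\<in>UNIV. nu $ i * P $ i $ j)) \<longleftrightarrow> nu v* (mat 1 - P) = lam"
    for nu :: "real^'d"
    by (auto simp: vec_eq_iff vector_matrix_mult_def mat_def algebra_simps sum_subtractf
        if_distrib[of "\<lambda>x. _ * x"] cong: if_cong)
  show ?thesis
    unfolding traffic_def traffic_iff
  proof (rule the_equality)
    show "(lam v* Gmat P) v* (mat 1 - P) = lam" by (simp add: vector_matrix_mul_assoc inv(2))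
    fix nu assume "nu v* (mat 1 - P) = lam"
    then show "nu = lam v* Gmat P" by (metis inv(1) vector_matrix_mul_assoc vector_matrix_mul_rid)
  qed
qed

lemma traffic_escape_prob:
  assumes JP: "jackson_params lam mu P" and A: "hypA lam mu P"
  shows "traffic lam P $ k * escape_prob P k = (\<Sum>i\<in>UNIV. lam $ i * hitQ P i k)"
  using escape_prob_pos[OF JP A, of k]
  by (simp add: traffic_eq[OF JP A] Gmat_entry[OF JP A] vector_matrix_mult_def sum_distrib_right)

section \<open>The generator on finitely many jumps\<close>

definition jump_set :: "(int^'d::finite) set" where
  "jump_set = range unitv \<union> range (\<lambda>i. - unitv i) \<union> (\<lambda>(i, j). unitv j - unitv i) ` UNIV"

lemma finite_jump_set: "finite (jump_set :: (int^'d::finite) set)"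
  unfolding jump_set_def by auto

lemma qrate_eq_0:
  assumes "v \<notin> jump_set"
  shows "qrate lam mu P v = 0"
proof -
  have "v \<noteq> unitv i" "v \<noteq> - unitv i" "v \<noteq> unitv j - unitv i" for i j
    using assms rev_image_eqI[of "(i, j)" UNIV _ "\<lambda>(i, j). unitv j - unitv i"]
    by (auto simp: jump_set_def)
  then show ?thesis by (simp add: qrate_def)
qed

lemma gen_eq_finite_sum:
  "gen lam mu P f y = (\<Sum>z\<in>(\<lambda>v. y + v) ` jump_set \<inter> posorth. qrate lam mu P (z - y) * (f z - f y))"
  unfolding gen_def
proof (subst infsum_cong_neutral)
  fix z assume "z \<in> posorth - ((\<lambda>v. y + v) ` jump_set \<inter> posorth)"
  then have "z - y \<notin> jump_set" by (auto simp: image_iff)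
  then show "qrate lam mu P (z - y) * (f z - f y) = 0" by (simp add: qrate_eq_0)
qed (use finite_jump_set in \<open>auto intro: infsum_finite\<close>)

lemma gen_sum:
  fixes f :: "'k \<Rightarrow> int^'d::finite \<Rightarrow> real"
  shows "gen lam mu P (\<lambda>x. \<Sum>k\<in>K. f k x) y = (\<Sum>k\<in>K. gen lam mu P (f k) y)"
  unfolding gen_eq_finite_sum
  by (simp add: sum_subtractf[symmetric] sum_distrib_left sum.swap[of _ K])

lemma sum_if_diff_eq:
  fixes g :: "'a::ab_group_add \<Rightarrow> 'b::comm_monoid_add"
  assumes "finite U"
  shows "(\<Sum>z\<in>U. if z - y = v then g z else 0) = (if y + v \<in> U then g (y + v) else 0)"
proof -
  have "(\<Sum>z\<in>U. if z - y = v then g z else 0) = (\<Sum>z\<in>U. if y + v = z then g z else 0)"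
    by (intro sum.cong refl) (auto simp: algebra_simps)
  then show ?thesis using assms by simp
qed

lemma gen_eq:
  fixes lam mu :: "real^'d::finite" and P :: "real^'d^'d"
  assumes JP: "jackson_params lam mu P" and y: "y \<in> posorth"
  shows "gen lam mu P f y = (\<Sum>i\<in>UNIV. lam $ i * (f (y + unitv i) - f y))
    + (\<Sum>i\<in>UNIV. if 0 < y $ i then mu $ i * (exitp P i * (f (y - unitv i) - f y)
          + (\<Sum>j\<in>UNIV. P $ i $ j * (f (y + (unitv j - unitv i)) - f y))) else 0)"
proof -
  define T where "T = (\<lambda>v. y + v) ` jump_set \<inter> posorth"
  let ?g = "\<lambda>z. f z - f y"
  have fin: "finite T" unfolding T_def using finite_jump_set by blast
  have mem: "y + v \<in> T \<longleftrightarrow> y + v \<in> posorth" if "v \<in> jump_set" for v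
    using that unfolding T_def by auto
  have jumps: "unitv i \<in> jump_set" "- unitv i \<in> jump_set" "unitv j - unitv i \<in> jump_set" for i j :: 'd
    unfolding jump_set_def by (auto intro!: rev_image_eqI[of "(i, j)"])
  have moves: "y + unitv i \<in> posorth" "y + - unitv i \<in> posorth \<longleftrightarrow> 0 < y $ i"
    "y + (unitv j - unitv i) \<in> posorth \<longleftrightarrow> i = j \<or> 0 < y $ i" for i j
    using y by (auto simp: posorth_def unitv_nth)
  have "gen lam mu P f y = (\<Sum>z\<in>T. qrate lam mu P (z - y) * ?g z)"
    unfolding gen_eq_finite_sum T_def ..
  also have "\<dots> = (\<Sum>i\<in>UNIV. \<Sum>z\<in>T. if z - y = unitv i then lam $ i * ?g z else 0)
      + (\<Sum>i\<in>UNIV. \<Sum>z\<in>T. if z - y = - unitv i then mu $ i * exitp P i * ?g z else 0)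
      + (\<Sum>i\<in>UNIV. \<Sum>j\<in>UNIV. \<Sum>z\<in>T. if z - y = unitv j - unitv i then mu $ i * P $ i $ j * ?g z else 0)"
    unfolding qrate_def distrib_right sum.distrib sum_distrib_right if_distrib[of "\<lambda>x. x * _"] mult_zero_left
    by (simp only: sum.swap[of _ T])
  also have "\<dots> = (\<Sum>i\<in>UNIV. lam $ i * ?g (y + unitv i))
      + (\<Sum>i\<in>UNIV. if 0 < y $ i then mu $ i * exitp P i * ?g (y + - unitv i) else 0)
      + (\<Sum>i\<in>UNIV. \<Sum>j\<in>UNIV. if i = j \<or> 0 < y $ i then mu $ i * P $ i $ j * ?g (y + (unitv j - unitv i)) else 0)"
    by (simp only: sum_if_diff_eq[OF fin] mem jumps moves if_True)
  also have "\<dots> = (\<Sum>i\<in>UNIV. lam $ i * ?g (y + unitv i))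
    + (\<Sum>i\<in>UNIV. if 0 < y $ i then mu $ i * (exitp P i * ?g (y - unitv i)
          + (\<Sum>j\<in>UNIV. P $ i $ j * ?g (y + (unitv j - unitv i)))) else 0)"
  proof -
    have no_self_routing: "P $ i $ i = 0" for i using JP by (simp add: jackson_params_def)
    have "(\<Sum>j\<in>UNIV. if i = j \<or> 0 < y $ i then mu $ i * P $ i $ j * ?g (y + (unitv j - unitv i)) else 0)
        = (if 0 < y $ i then mu $ i * (\<Sum>j\<in>UNIV. P $ i $ j * ?g (y + (unitv j - unitv i))) else 0)" for i
      by (cases "0 < y $ i") (simp_all add: sum_distrib_left mult.assoc no_self_routing)
    then show ?thesis
      by (simp add: sum.distrib[symmetric]) (intro sum.cong refl, simp add: distrib_left mult.assoc)
  qed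
  finally show ?thesis .
qed

section \<open>The generator applied to \<open>h\<^sub>\<gamma>\<close>\<close>

definition real_vec :: "int^'d::finite \<Rightarrow> real^'d" where
  "real_vec x = (\<chi> j. real_of_int (x $ j))"

lemma real_vec_add: "real_vec (x + w) = real_vec x + real_vec w"
  by (simp add: real_vec_def vec_eq_iff)

lemma real_vec_diff: "real_vec (x - w) = real_vec x - real_vec w"
  by (simp add: real_vec_def vec_eq_iff)

lemma real_vec_unitv: "real_vec (unitv i) = axis i 1"
  by (simp add: real_vec_def unitv_def axis_def vec_eq_iff)

lemma hfun_eq: "hfun P gamma x = (\<Sum>k\<in>UNIV. exp (gvec P gamma k \<bullet> real_vec x))"
  by (simp add: hfun_def inner_vec_def real_vec_def)

lemma hfun_pos: "0 < hfun P gamma x"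
  unfolding hfun_eq by (intro sum_pos) auto

lemma hfun_weights_sum: "(\<Sum>k\<in>UNIV. exp (gvec P gamma k \<bullet> real_vec x) / hfun P gamma x) = 1"
  using hfun_pos[of P gamma x] by (simp add: sum_divide_distrib[symmetric] hfun_eq[symmetric])

lemma gen_exp:
  fixes lam mu :: "real^'d::finite" and P :: "real^'d^'d"
  assumes JP: "jackson_params lam mu P" and y: "y \<in> posorth"
  shows "gen lam mu P (\<lambda>x. exp (a \<bullet> real_vec x)) y = exp (a \<bullet> real_vec y) *
    ((\<Sum>i\<in>UNIV. lam $ i * (exp (a $ i) - 1))
   + (\<Sum>i\<in>UNIV. if 0 < y $ i then mu $ i * (exitp P i * (exp (- a $ i) - 1)
        + (\<Sum>j\<in>UNIV. P $ i $ j * (exp (a $ j - a $ i) - 1))) else 0))"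
proof -
  have shift: "exp (a \<bullet> real_vec (y + v)) - exp (a \<bullet> real_vec y)
      = exp (a \<bullet> real_vec y) * (exp (a \<bullet> real_vec v) - 1)"
    "exp (a \<bullet> real_vec (y - v)) - exp (a \<bullet> real_vec y)
      = exp (a \<bullet> real_vec y) * (exp (- (a \<bullet> real_vec v)) - 1)" for v
    by (simp_all add: real_vec_add real_vec_diff exp_add exp_diff exp_minus algebra_simps divide_inverse)
  show ?thesis
    unfolding gen_eq[OF JP y] shift
    by (simp add: real_vec_diff real_vec_unitv inner_diff_right inner_axis
        sum_distrib_left distrib_left mult_ac if_distrib[of "\<lambda>x. _ * x"] cong: if_cong)
qed

lemma routing_ratio_sum_eq:
  fixes b :: "'d::finite \<Rightarrow> real"
  assumes "0 < b i"
  shows "exitp P i * (1 / b i - 1) + (\<Sum>j\<in>UNIV. P $ i $ j * (b j / b i - 1))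
    = (exitp P i + (\<Sum>j\<in>UNIV. P $ i $ j * b j) - b i) / b i"
proof -
  have "(\<Sum>j\<in>UNIV. P $ i $ j * (b j / b i - 1)) = (\<Sum>j\<in>UNIV. P $ i $ j * b j) / b i - (\<Sum>j\<in>UNIV. P $ i $ j)"
    by (simp add: sum_subtractf sum_divide_distrib right_diff_distrib)
  then show ?thesis using assms by (simp add: exitp_def field_simps)
qed

lemma hitQ_affine_harmonic:
  assumes P: "substochastic P"
  shows "exitp P i + (\<Sum>j\<in>UNIV. P $ i $ j * (1 + hitQ P j k * g)) - (1 + hitQ P i k * g)
    = (if i = k then - g * escape_prob P k else 0)"
proof -
  have "exitp P i + (\<Sum>j\<in>UNIV. P $ i $ j * (1 + hitQ P j k * g)) - (1 + hitQ P i k * g)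
      = g * ((\<Sum>j\<in>UNIV. P $ i $ j * hitQ P j k) - hitQ P i k)"
    by (simp add: exitp_def sum.distrib sum_distrib_left algebra_simps)
  then show ?thesis
    using hitQ_first_step[OF P, of i k] hitQ_self[OF P, of k] by (auto simp: escape_prob_def algebra_simps)
qed

lemma gen_exp_gvec:
  fixes lam mu :: "real^'d::finite" and P :: "real^'d^'d"
  assumes JP: "jackson_params lam mu P" and A: "hypA lam mu P"
    and gamma: "0 \<le> gamma $ k" and y: "y \<in> posorth"
  shows "gen lam mu P (\<lambda>x. exp (gvec P gamma k \<bullet> real_vec x)) y
    = exp (gvec P gamma k \<bullet> real_vec y) * (gamma $ k / Gmat P $ k $ k
        * (traffic lam P $ k - (if 0 < y $ k then mu $ k / (1 + gamma $ k) else 0)))"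
proof -
  have P: "substochastic P" using JP by (rule jackson_params_substochastic)
  define a where "a = gvec P gamma k"
  define b where "b i = 1 + hitQ P i k * gamma $ k" for i
  have b_pos: "0 < b i" for i
    unfolding b_def using hitQ_nonneg[OF P, of i k] gamma by (simp add: add_pos_nonneg)
  have exp_a: "exp (a $ i) = b i" for i
    using b_pos[of i] by (simp add: a_def gvec_def b_def)
  have arrivals: "(\<Sum>i\<in>UNIV. lam $ i * (exp (a $ i) - 1)) = gamma $ k / Gmat P $ k $ k * traffic lam P $ k"
    using traffic_escape_prob[OF JP A, of k]
    by (simp add: exp_a b_def Gmat_diag[OF JP A] sum_distrib_left sum_distrib_right mult_ac)
  have departure: "mu $ i * (exitp P i * (exp (- a $ i) - 1) + (\<Sum>j\<in>UNIV. P $ i $ j * (exp (a $ j - a $ i) - 1)))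
      = (if i = k then - gamma $ k / Gmat P $ k $ k * mu $ k / (1 + gamma $ k) else 0)" for i
  proof -
    have "exitp P i * (exp (- a $ i) - 1) + (\<Sum>j\<in>UNIV. P $ i $ j * (exp (a $ j - a $ i) - 1))
        = (if i = k then - gamma $ k * escape_prob P k else 0) / b i"
      unfolding exp_minus exp_diff exp_a inverse_eq_divide routing_ratio_sum_eq[of b, OF b_pos]
      unfolding b_def hitQ_affine_harmonic[OF P] ..
    then show ?thesis
      using hitQ_self[OF P, of k] by (simp add: b_def Gmat_diag[OF JP A])
  qed
  show ?thesis
    unfolding gen_exp[OF JP y] a_def[symmetric] arrivals departure
    by (simp add: if_distrib[of "\<lambda>x. if 0 < y $ _ then x else 0"] algebra_simps cong: if_cong)
qed

lemma gen_hfun: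
  fixes lam mu :: "real^'d::finite" and P :: "real^'d^'d"
  assumes JP: "jackson_params lam mu P" and A: "hypA lam mu P"
    and gamma: "\<And>k. 0 \<le> gamma $ k" and y: "y \<in> posorth"
  shows "gen lam mu P (hfun P gamma) y = (\<Sum>k\<in>UNIV. exp (gvec P gamma k \<bullet> real_vec y)
    * (gamma $ k / Gmat P $ k $ k * (traffic lam P $ k - (if 0 < y $ k then mu $ k / (1 + gamma $ k) else 0))))"
proof -
  have "hfun P gamma = (\<lambda>x. \<Sum>k\<in>UNIV. exp (gvec P gamma k \<bullet> real_vec x))"
    by (intro ext hfun_eq)
  then show ?thesis by (simp add: gen_sum gen_exp_gvec[OF JP A gamma y])
qed

lemma gen_hfun_ratio:
  fixes lam mu :: "real^'d::finite" and P :: "real^'d^'d"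
  assumes JP: "jackson_params lam mu P" and A: "hypA lam mu P"
    and gamma: "\<And>k. 0 \<le> gamma $ k" and y: "y \<in> posorth"
  shows "gen lam mu P (hfun P gamma) y / hfun P gamma y
    = (\<Sum>k\<in>UNIV. exp (gvec P gamma k \<bullet> real_vec y) / hfun P gamma y
        * (gamma $ k / Gmat P $ k $ k * (traffic lam P $ k - mu $ k / (1 + gamma $ k))
           + (if y $ k = 0 then gamma $ k / Gmat P $ k $ k * (mu $ k / (1 + gamma $ k)) else 0)))"
proof -
  have rearrange: "E * (c * (a - (if 0 < t then q else 0))) / h = E / h * (c * (a - q) + (if t = 0 then c * q else 0))"
    if "0 \<le> t" for E c a q h :: real and t :: int
    using that by (cases "t = 0") (simp_all add: divide_inverse algebra_simps)
  show ?thesis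
    unfolding gen_hfun[OF JP A gamma y] sum_divide_distrib
    using y by (intro sum.cong refl rearrange) (simp add: posorth_def)
qed

section \<open>Limit superior along \<open>|x| \<rightarrow> \<infinity>\<close>\<close>

lemma frequently_le_Limsup:
  fixes f :: "'a \<Rightarrow> 'b::complete_linorder"
  assumes "frequently (\<lambda>x. c \<le> f x) F"
  shows "c \<le> Limsup F f"
proof (rule ccontr)
  assume "\<not> c \<le> Limsup F f"
  then have "eventually (\<lambda>x. f x < c) F" by (intro Limsup_lessD) simp
  then show False using assms by (simp add: frequently_def not_le)
qed

lemma Limsup_ereal_eqI:
  fixes f :: "'a \<Rightarrow> real"
  assumes upper: "\<And>\<epsilon>. 0 < \<epsilon> \<Longrightarrow> eventually (\<lambda>x. f x \<le> c + \<epsilon>) F"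
    and lower: "\<And>\<epsilon>. 0 < \<epsilon> \<Longrightarrow> frequently (\<lambda>x. c - \<epsilon> \<le> f x) F"
  shows "Limsup F (\<lambda>x. ereal (f x)) = ereal c"
proof (rule antisym)
  show "Limsup F (\<lambda>x. ereal (f x)) \<le> ereal c"
  proof (rule ereal_le_epsilon2)
    fix \<epsilon> :: real assume "0 < \<epsilon>"
    then have "Limsup F (\<lambda>x. ereal (f x)) \<le> ereal (c + \<epsilon>)"
      by (intro Limsup_bounded) (use upper in \<open>auto elim: eventually_mono\<close>)
    then show "Limsup F (\<lambda>x. ereal (f x)) \<le> ereal c + ereal \<epsilon>" by simp
  qed
  show "ereal c \<le> Limsup F (\<lambda>x. ereal (f x))"
  proof (rule ereal_le_epsilon2)
    fix \<epsilon> :: real assume "0 < \<epsilon>"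
    then have "ereal (c - \<epsilon>) \<le> Limsup F (\<lambda>x. ereal (f x))"
      by (intro frequently_le_Limsup) (use lower in \<open>auto elim: frequently_elim1\<close>)
    then show "ereal c \<le> Limsup F (\<lambda>x. ereal (f x)) + ereal \<epsilon>"
      by (cases "Limsup F (\<lambda>x. ereal (f x))") auto
  qed
qed

lemma eventually_posorth_at_inf_pos: "eventually (\<lambda>x. x \<in> posorth) at_inf_pos"
  by (simp add: at_inf_pos_def eventually_inf_principal)

lemma filterlim_norm1_at_inf_pos:
  "filterlim (\<lambda>x. real_of_int (\<Sum>i\<in>UNIV. \<bar>x $ i\<bar>)) at_top (at_inf_pos :: (int^'d::finite) filter)"
proof -
  have "filterlim (\<lambda>x::int^'d. \<Sum>i\<in>UNIV. \<bar>x $ i\<bar>) at_top at_inf_pos"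
    unfolding at_inf_pos_def by (rule filterlim_mono[OF filterlim_filtercomap order_refl inf_le1])
  then show ?thesis by (rule filterlim_compose[OF filterlim_real_of_int_at_top])
qed

lemma filterlim_ray_at_inf_pos:
  "filterlim (\<lambda>n::nat. \<chi> i. if i = k then int n else 0) (at_inf_pos :: (int^'d::finite) filter) sequentially"
proof -
  have "(\<Sum>i\<in>UNIV. \<bar>(\<chi> i. if i = k then int n else 0) $ i\<bar>) = int n" for n :: nat
    by (simp add: if_distrib[of abs] cong: if_cong)
  then show ?thesis
    unfolding at_inf_pos_def filterlim_inf filterlim_filtercomap_iff filterlim_principal
    by (simp add: o_def filterlim_int_sequentially posorth_def)
qed

definition face_simplex :: "'d::finite \<Rightarrow> (real^'d) set" where
  "face_simplex k = {v. (\<forall>i. 0 \<le> v $ i) \<and> v $ k = 0 \<and> (\<Sum>i\<in>UNIV. v $ i) = 1}"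

lemma compact_face_simplex: "compact (face_simplex k)"
proof (rule compact_eq_bounded_closed[THEN iffD2], rule conjI)
  have "norm v \<le> 1" if "v \<in> face_simplex k" for v
    using norm_le_l1_cart[of v] that by (simp add: face_simplex_def)
  then show "bounded (face_simplex k)" unfolding bounded_iff by blast
  show "closed (face_simplex k)"
    unfolding face_simplex_def
    by (intro closed_Collect_conj closed_Collect_all closed_Collect_le closed_Collect_eq continuous_intros)
qed

text \<open>The continuous function \<open>v \<mapsto> \<Sum>\<^sub>j max 0 ((a j - c) \<bullet> v)\<close> is positive on the compact set
  \<open>face_simplex k\<close>, hence bounded below there by a positive constant.\<close>

lemma face_simplex_margin:
  fixes a :: "'j::finite \<Rightarrow> real^'d::finite" and c :: "real^'d"
  assumes strict: "\<And>v. v \<in> face_simplex k \<Longrightarrow> \<exists>j. c \<bullet> v < a j \<bullet> v"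
  shows "\<exists>\<eta>>0. \<forall>v\<in>face_simplex k. \<exists>j. \<eta> \<le> (a j - c) \<bullet> v"
proof (cases "face_simplex k = {}")
  case False
  define g where "g v = (\<Sum>j\<in>UNIV. max 0 ((a j - c) \<bullet> v))" for v
  have "continuous_on (face_simplex k) g" unfolding g_def by (intro continuous_intros)
  then obtain v0 where v0: "v0 \<in> face_simplex k" and v0_min: "\<And>v. v \<in> face_simplex k \<Longrightarrow> g v0 \<le> g v"
    using continuous_attains_inf[OF compact_face_simplex False] by blast
  obtain j0 where "c \<bullet> v0 < a j0 \<bullet> v0" using strict[OF v0] by blast
  then have "0 < max 0 ((a j0 - c) \<bullet> v0)" by (simp add: inner_diff_left)
  also have "\<dots> \<le> g v0" unfolding g_def by (rule member_le_sum) auto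
  finally have g0: "0 < g v0" .
  define \<eta> where "\<eta> = g v0 / CARD('j)"
  have "\<exists>j. \<eta> \<le> (a j - c) \<bullet> v" if "v \<in> face_simplex k" for v
  proof (rule ccontr)
    assume "\<nexists>j. \<eta> \<le> (a j - c) \<bullet> v"
    then have "g v < (\<Sum>j\<in>(UNIV::'j set). \<eta>)"
      unfolding g_def using g0 by (intro sum_strict_mono) (auto simp: \<eta>_def not_le)
    then show False using v0_min[OF that] by (simp add: \<eta>_def)
  qed
  moreover have "0 < \<eta>" using g0 by (simp add: \<eta>_def)
  ultimately show ?thesis by blast
qed (auto intro: exI[of _ 1])

lemma face_uniform_margin:
  fixes a :: "'j::finite \<Rightarrow> real^'d::finite" and c :: "real^'d"
  assumes strict: "\<And>v. (\<forall>i. 0 \<le> v $ i) \<Longrightarrow> v \<noteq> 0 \<Longrightarrow> v $ k = 0 \<Longrightarrow> \<exists>j. c \<bullet> v < a j \<bullet> v"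
  shows "\<exists>\<eta>>0. \<forall>v. (\<forall>i. 0 \<le> v $ i) \<longrightarrow> v $ k = 0 \<longrightarrow> (\<exists>j. \<eta> * (\<Sum>i\<in>UNIV. v $ i) \<le> a j \<bullet> v - c \<bullet> v)"
proof -
  have zero: "v = 0" if "\<forall>i. 0 \<le> v $ i" "(\<Sum>i\<in>UNIV. v $ i) = 0" for v :: "real^'d"
    using that sum_nonneg_eq_0_iff[of UNIV "\<lambda>i. v $ i"] by (simp add: vec_eq_iff)
  have "\<exists>j. c \<bullet> v < a j \<bullet> v" if "v \<in> face_simplex k" for v
    using that zero[of v] by (intro strict) (auto simp: face_simplex_def)
  then obtain \<eta> where \<eta>: "0 < \<eta>" and margin: "\<And>v. v \<in> face_simplex k \<Longrightarrow> \<exists>j. \<eta> \<le> (a j - c) \<bullet> v"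
    using face_simplex_margin[of k c a] by blast
  show ?thesis
  proof (intro exI[of _ \<eta>] conjI allI impI \<eta>)
    fix v :: "real^'d" assume v: "\<forall>i. 0 \<le> v $ i" "v $ k = 0"
    define s where "s = (\<Sum>i\<in>UNIV. v $ i)"
    show "\<exists>j. \<eta> * s \<le> a j \<bullet> v - c \<bullet> v"
    proof (cases "s = 0")
      case True then show ?thesis using zero[OF v(1)] by (simp add: s_def)
    next
      case False
      then have s: "0 < s" using v by (simp add: s_def sum_nonneg order_le_neq_trans)
      have "(1 / s) *\<^sub>R v \<in> face_simplex k"
        using v s by (auto simp: face_simplex_def s_def sum_divide_distrib[symmetric])
      then obtain j where "\<eta> \<le> (a j - c) \<bullet> ((1 / s) *\<^sub>R v)" using margin by blast
      then show ?thesis using s by (auto simp: inner_diff_left field_simps)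
    qed
  qed
qed

lemma hfun_weight_tendsto_0:
  fixes P :: "real^'d^'d::finite" and gamma :: "real^'d"
  assumes "gamma \<in> GammaSet P"
  shows "((\<lambda>x. if x $ k = 0 then exp (gvec P gamma k \<bullet> real_vec x) / hfun P gamma x else 0)
    \<longlongrightarrow> 0) at_inf_pos"
proof -
  let ?a = "gvec P gamma" and ?norm = "\<lambda>x::int^'d. real_of_int (\<Sum>i\<in>UNIV. \<bar>x $ i\<bar>)"
  have "\<exists>j. ?a k \<bullet> v < ?a j \<bullet> v" if "\<forall>i. 0 \<le> v $ i" "v \<noteq> 0" "v $ k = 0" for v
  proof -
    have "?a k \<bullet> v < (MAX j\<in>UNIV. ?a j \<bullet> v)"
      using assms that unfolding GammaSet_def by blast
    then show ?thesis by (simp add: Max_gr_iff)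
  qed
  then obtain \<eta> where \<eta>: "0 < \<eta>" and margin: "\<And>v. \<forall>i. 0 \<le> v $ i \<Longrightarrow> v $ k = 0 \<Longrightarrow>
      \<exists>j. \<eta> * (\<Sum>i\<in>UNIV. v $ i) \<le> ?a j \<bullet> v - ?a k \<bullet> v"
    using face_uniform_margin[where a = ?a and c = "?a k" and k = k] by blast
  have bound: "norm (if x $ k = 0 then exp (?a k \<bullet> real_vec x) / hfun P gamma x else 0)
      \<le> exp (- (\<eta> * ?norm x))" if x: "x \<in> posorth" for x
  proof (cases "x $ k = 0")
    case True
    have nonneg: "\<forall>i. 0 \<le> real_vec x $ i" using x by (simp add: posorth_def real_vec_def)
    then obtain j where j: "\<eta> * ?norm x \<le> ?a j \<bullet> real_vec x - ?a k \<bullet> real_vec x"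
      using margin[of "real_vec x"] True x by (auto simp: real_vec_def posorth_def)
    have "exp (?a k \<bullet> real_vec x) / hfun P gamma x \<le> exp (?a k \<bullet> real_vec x) / exp (?a j \<bullet> real_vec x)"
      unfolding hfun_eq by (intro divide_left_mono member_le_sum mult_pos_pos sum_pos) auto
    also have "\<dots> \<le> exp (- (\<eta> * ?norm x))"
      using j by (simp add: exp_diff[symmetric])
    finally show ?thesis using True hfun_pos[of P gamma x] by simp
  qed simp
  have "filterlim (\<lambda>x. - (\<eta> * ?norm x)) at_bot at_inf_pos"
    unfolding filterlim_uminus_at_bot minus_minus
    by (rule filterlim_tendsto_pos_mult_at_top[OF tendsto_const \<eta> filterlim_norm1_at_inf_pos])
  then have lim: "((\<lambda>x. exp (- (\<eta> * ?norm x))) \<longlongrightarrow> 0) at_inf_pos"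
    by (rule filterlim_compose[OF exp_at_bot])
  have ev: "eventually (\<lambda>x. norm (if x $ k = 0 then exp (?a k \<bullet> real_vec x) / hfun P gamma x else 0)
      \<le> exp (- (\<eta> * ?norm x))) at_inf_pos"
    using eventually_posorth_at_inf_pos by (rule eventually_mono) (rule bound)
  show ?thesis by (rule Lim_null_comparison[OF ev lim])
qed

context
  fixes w :: "'d \<Rightarrow> int^'d::finite \<Rightarrow> real" and m D :: "'d \<Rightarrow> real" and R :: "int^'d \<Rightarrow> real"
  assumes w_nonneg: "\<And>k x. 0 \<le> w k x" and w_sum: "\<And>x. (\<Sum>k\<in>UNIV. w k x) = 1"
    and w_decay: "\<And>k. ((\<lambda>x. if x $ k = 0 then w k x else 0) \<longlongrightarrow> 0) at_inf_pos"
    and D_nonneg: "\<And>k. 0 \<le> D k"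
    and R_eq: "\<And>x. x \<in> posorth \<Longrightarrow> R x = (\<Sum>k\<in>UNIV. w k x * (m k + (if x $ k = 0 then D k else 0)))"
begin

lemma weighted_drift_eq:
  "(\<Sum>k\<in>UNIV. w k x * m k) = (MAX k\<in>UNIV. m k) - (\<Sum>k\<in>UNIV. w k x * ((MAX k\<in>UNIV. m k) - m k))"
  by (simp add: right_diff_distrib sum_subtractf sum_distrib_right[symmetric] w_sum)

lemma weighted_drift_eventually_le:
  assumes "0 < \<epsilon>"
  shows "eventually (\<lambda>x. R x \<le> (MAX k\<in>UNIV. m k) + \<epsilon>) at_inf_pos"
proof -
  define err where "err x = (\<Sum>k\<in>UNIV. (if x $ k = 0 then w k x else 0) * D k)" for x
  have "(err \<longlongrightarrow> 0) at_inf_pos"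
    unfolding err_def by (auto intro!: tendsto_null_sum tendsto_mult_left_zero w_decay)
  then have "eventually (\<lambda>x. err x < \<epsilon>) at_inf_pos" using assms by (rule order_tendstoD(2))
  with eventually_posorth_at_inf_pos show ?thesis
  proof eventually_elim
    case (elim x)
    have "R x = (\<Sum>k\<in>UNIV. w k x * m k) + err x"
      unfolding R_eq[OF elim(1)] err_def distrib_left sum.distrib
      by (intro arg_cong2[where f = "(+)"] sum.cong) auto
    moreover have "0 \<le> (\<Sum>k\<in>UNIV. w k x * ((MAX k\<in>UNIV. m k) - m k))"
      using w_nonneg by (intro sum_nonneg mult_nonneg_nonneg) (simp_all add: Max_ge)
    ultimately show ?case using weighted_drift_eq[of x] elim(2) by linarith
  qed
qed

text \<open>Along the ray \<open>n e\<^sub>k\<^sub>0\<close> with \<open>m k\<^sub>0\<close> maximal, every other weight sits on a vanishing face.\<close>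

lemma weighted_drift_frequently_ge:
  assumes "0 < \<epsilon>"
  shows "frequently (\<lambda>x. (MAX k\<in>UNIV. m k) - \<epsilon> \<le> R x) at_inf_pos"
proof -
  define M where "M = (MAX k\<in>UNIV. m k)"
  have "M \<in> range m" unfolding M_def by (rule Max_in) auto
  then obtain k0 where k0: "m k0 = M" by blast
  define ray where "ray n = (\<chi> i. if i = k0 then int n else 0)" for n :: nat
  have ray_lim: "filterlim ray at_inf_pos sequentially"
    unfolding ray_def by (rule filterlim_ray_at_inf_pos)
  define gap where "gap x = (\<Sum>k\<in>UNIV. (if x $ k = 0 then w k x else 0) * (M - m k))" for x
  have gap_lim: "(gap \<longlongrightarrow> 0) at_inf_pos"
    unfolding gap_def by (auto intro!: tendsto_null_sum tendsto_mult_left_zero w_decay)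
  have "eventually (\<lambda>n. gap (ray n) < \<epsilon>) sequentially"
    using order_tendstoD(2)[OF filterlim_compose[OF gap_lim ray_lim] assms] .
  then have good: "eventually (\<lambda>n. M - \<epsilon> \<le> R (ray n)) sequentially"
  proof eventually_elim
    case (elim n)
    have ray_pos: "ray n \<in> posorth" by (simp add: ray_def posorth_def)
    have "gap (ray n) = (\<Sum>k\<in>UNIV. w k (ray n) * (M - m k))"
      unfolding gap_def using k0 by (intro sum.cong) (auto simp: ray_def)
    moreover have "(\<Sum>k\<in>UNIV. w k (ray n) * m k) \<le> R (ray n)"
      unfolding R_eq[OF ray_pos] using w_nonneg D_nonneg by (intro sum_mono mult_left_mono) auto
    ultimately show ?case using weighted_drift_eq[of "ray n"] elim unfolding M_def by linarith
  qed
  show ?thesis unfolding M_def[symmetric]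
  proof (rule ccontr)
    assume "\<not> frequently (\<lambda>x. M - \<epsilon> \<le> R x) at_inf_pos"
    then have "eventually (\<lambda>n. \<not> M - \<epsilon> \<le> R (ray n)) sequentially"
      unfolding not_frequently by (rule eventually_compose_filterlim[OF _ ray_lim])
    with good have "eventually (\<lambda>n. False) sequentially" by eventually_elim simp
    then show False by simp
  qed
qed

lemma Limsup_weighted_drift: "Limsup at_inf_pos (\<lambda>x. ereal (R x)) = ereal (MAX k\<in>UNIV. m k)"
  by (rule Limsup_ereal_eqI) (use weighted_drift_eventually_le weighted_drift_frequently_ge in auto)

end

theorem theorem2p1:
  fixes lam mu :: "real^'d::finite" and P :: "real^'d^'d" and gamma :: "real^'d"
  assumes "jackson_params lam mu P"
    and "hypA lam mu P"
    and "gamma \<in> GammaSet P"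
  shows "Limsup at_inf_pos (\<lambda>x. ereal (gen lam mu P (hfun P gamma) x / hfun P gamma x))
       = ereal (- (MIN i\<in>UNIV. gamma $ i / Gmat P $ i $ i
                   * (mu $ i / (1 + gamma $ i) - traffic lam P $ i)))"
proof -
  note JP = assms(1) and A = assms(2) and G = assms(3)
  have gamma: "0 \<le> gamma $ k" for k using G by (simp add: GammaSet_def)
  have mu: "0 < mu $ k" for k using JP by (simp add: jackson_params_def)
  have "Limsup at_inf_pos (\<lambda>x. ereal (gen lam mu P (hfun P gamma) x / hfun P gamma x))
      = ereal (MAX k\<in>UNIV. gamma $ k / Gmat P $ k $ k * (traffic lam P $ k - mu $ k / (1 + gamma $ k)))"
  proof (rule Limsup_weighted_drift[where w = "\<lambda>k x. exp (gvec P gamma k \<bullet> real_vec x) / hfun P gamma x"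
        and D = "\<lambda>k. gamma $ k / Gmat P $ k $ k * (mu $ k / (1 + gamma $ k))"])
    show "0 \<le> gamma $ k / Gmat P $ k $ k * (mu $ k / (1 + gamma $ k))" for k
      using gamma[of k] mu[of k] Gmat_diag_pos[OF JP A, of k] by simp
  qed (use hfun_weights_sum hfun_weight_tendsto_0[OF G] gen_hfun_ratio[OF JP A gamma]
      in \<open>auto intro: divide_nonneg_pos hfun_pos\<close>)
  also have "\<dots> = - (MIN i\<in>UNIV. gamma $ i / Gmat P $ i $ i * (mu $ i / (1 + gamma $ i) - traffic lam P $ i))"
    by (simp add: image_image algebra_simps)
  finally show ?thesis .
qed

end
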